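(* Let $(X,\|\cdot\|)$ be a normed linear space over $\mathbb{R}$ or $\mathbb{C}$, let $a\in X$ with $a\neq 0$, and let $x_1,\dots,x_n\in X$ satisfy $\|x_j-a\|\le\|a\|$ for each $j\in\{1,\dots,n\}$. Then for any $p_1,\dots,p_n\ge0$ with $\sum_{j=1}^n p_j=1$, $$\Big\|\sum_{j=1}^n p_jx_j\Big\|\,\|a\|+\frac12\sum_{j=1}^n p_j\|x_j\|\,\|x_j-a\|\ \ge\ \frac12\|a\|\sum_{j=1}^n p_j\|x_j\|.$$ *)

theory Defs
  imports "HOL-Analysis.Analysis"
begin

end

theory Submission
  imports Defs
begin

text \<open>
  By the reverse triangle inequality,
  \<open>\<parallel>\<Sum> p\<^sub>j x\<^sub>j\<parallel> = \<parallel>a + \<Sum> p\<^sub>j (x\<^sub>j - a)\<parallel> \<ge> \<Sum> p\<^sub>j (\<parallel>a\<parallel> - \<parallel>x\<^sub>j - a\<parallel>)\<close>.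
  With this lower bound, the difference of the two sides of the claim becomes
  \<open>\<Sum> p\<^sub>j (\<parallel>a\<parallel> - \<parallel>x\<^sub>j - a\<parallel>) (\<parallel>a\<parallel> - \<parallel>x\<^sub>j\<parallel>/2)\<close>, and both factors are nonnegative
  because \<open>\<parallel>x\<^sub>j - a\<parallel> \<le> \<parallel>a\<parallel>\<close> implies \<open>\<parallel>x\<^sub>j\<parallel> \<le> 2\<parallel>a\<parallel>\<close>.
\<close>

lemma norm_convex_combination_ge:
  fixes x :: "'i \<Rightarrow> 'a::real_normed_vector"
  assumes p_nonneg: "\<And>j. j \<in> A \<Longrightarrow> p j \<ge> 0"
    and p_sum: "sum p A = 1"
  shows "(\<Sum>j\<in>A. p j * (norm a - norm (x j - a))) \<le> norm (\<Sum>j\<in>A. p j *\<^sub>R x j)"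
proof -
  have "(\<Sum>j\<in>A. p j *\<^sub>R a) = a"
    using p_sum by (metis scaleR_left.sum scaleR_one)
  then have split: "(\<Sum>j\<in>A. p j *\<^sub>R x j) = a + (\<Sum>j\<in>A. p j *\<^sub>R (x j - a))"
    by (simp add: scaleR_diff_right sum_subtractf)
  have "norm (\<Sum>j\<in>A. p j *\<^sub>R (x j - a)) \<le> (\<Sum>j\<in>A. norm (p j *\<^sub>R (x j - a)))"
    by (rule norm_sum)
  also have "\<dots> = (\<Sum>j\<in>A. p j * norm (x j - a))"
    by (rule sum.cong) (simp_all add: p_nonneg)
  finally have deviation: "norm (\<Sum>j\<in>A. p j *\<^sub>R (x j - a)) \<le> (\<Sum>j\<in>A. p j * norm (x j - a))" .
  have "(\<Sum>j\<in>A. p j * (norm a - norm (x j - a))) = norm a - (\<Sum>j\<in>A. p j * norm (x j - a))"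
    using p_sum by (simp add: right_diff_distrib sum_subtractf flip: sum_distrib_right)
  also have "\<dots> \<le> norm a - norm (\<Sum>j\<in>A. p j *\<^sub>R (x j - a))"
    using deviation by simp
  also have "\<dots> \<le> norm (\<Sum>j\<in>A. p j *\<^sub>R x j)"
    unfolding split by (metis norm_diff_ineq norm_minus_commute diff_minus_eq_add)
  finally show ?thesis .
qed

lemma norm_close_point_product_nonneg:
  fixes x a :: "'a::real_normed_vector"
  assumes "norm (x - a) \<le> norm a"
  shows "0 \<le> (norm a - norm (x - a)) * (norm a - norm x / 2)"
proof -
  have "norm x \<le> norm (x - a) + norm a"
    using norm_triangle_sub [of x a] by simp
  with assms show ?thesis
    by simp
qed

lemma convex_combination_norm_inequality:
  fixes x :: "'i \<Rightarrow> 'a::real_normed_vector"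
  assumes close: "\<And>j. j \<in> A \<Longrightarrow> norm (x j - a) \<le> norm a"
    and p_nonneg: "\<And>j. j \<in> A \<Longrightarrow> p j \<ge> 0"
    and p_sum: "sum p A = 1"
  shows "(1/2) * norm a * (\<Sum>j\<in>A. p j * norm (x j))
    \<le> norm (\<Sum>j\<in>A. p j *\<^sub>R x j) * norm a + (1/2) * (\<Sum>j\<in>A. p j * norm (x j) * norm (x j - a))"
proof -
  let ?lower = "\<Sum>j\<in>A. p j * (norm a - norm (x j - a))"
  have "(1/2) * norm a * (\<Sum>j\<in>A. p j * norm (x j))
      \<le> (1/2) * norm a * (\<Sum>j\<in>A. p j * norm (x j))
         + (\<Sum>j\<in>A. p j * ((norm a - norm (x j - a)) * (norm a - norm (x j) / 2)))"
    using close p_nonneg by (simp add: sum_nonneg norm_close_point_product_nonneg)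
  also have "\<dots> = ?lower * norm a + (1/2) * (\<Sum>j\<in>A. p j * norm (x j) * norm (x j - a))"
    by (simp add: sum_distrib_left sum_distrib_right algebra_simps
        flip: sum_subtractf sum.distrib)
  also have "\<dots> \<le> norm (\<Sum>j\<in>A. p j *\<^sub>R x j) * norm a + (1/2) * (\<Sum>j\<in>A. p j * norm (x j) * norm (x j - a))"
    using norm_convex_combination_ge [OF p_nonneg p_sum, of a x] by (simp add: mult_right_mono)
  finally show ?thesis .
qed

theorem proposition2p1:
  fixes a :: "'a::real_normed_vector" and x :: "nat \<Rightarrow> 'a" and p :: "nat \<Rightarrow> real" and n :: nat
  assumes "a \<noteq> 0"
    and "\<And>j. j \<in> {1..n} \<Longrightarrow> norm (x j - a) \<le> norm a"
    and "\<And>j. j \<in> {1..n} \<Longrightarrow> p j \<ge> 0"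
    and "(\<Sum>j=1..n. p j) = 1"
  shows "norm (\<Sum>j=1..n. p j *\<^sub>R x j) * norm a
           + (1/2) * (\<Sum>j=1..n. p j * norm (x j) * norm (x j - a))
         \<ge> (1/2) * norm a * (\<Sum>j=1..n. p j * norm (x j))"
  using convex_combination_norm_inequality [of "{1..n}" x a p] assms(2-4) by simp

end
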